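(* Consider the statements: (i) there exists no scalable acceptable deal; (ii) $\mathcal L$ is a linear subspace of $\mathbb R^N$; (iii) $\mathcal L=\{0\}$. Then (iii) implies (i). If $\ker(V_1):=\{x\in\mathbb R^N: V_1(x)=0\}=\{0\}$, then (i) implies (iii). If $\mathcal A^\infty\cap(-\mathcal A^\infty)=\{0\}$, then (ii) implies (i).
   Context: Standing setup: Let $\mathcal{X}$ be a real topological vector space partially ordered by a convex cone $\mathcal{X}_+\subset\mathcal X$; write $X\ge Y$ iff $X-Y\in\mathcal X_+$. Fix $N\in\mathbb N$ and: a set $\mathcal P\subset\mathbb R^N$ with $0\in\mathcal P$; a function $V_0:\mathbb R^N\to\mathbb R$ with $V_0(0)=0$ and $V_0(x)\ge -V_0(-x)$ for all $x\in\mathbb R^N$; a map $V_1:\mathbb R^N\to\mathcal X$ with $V_1(0)=0$ and $V_1(x)\le -V_1(-x)$ for all $x\in\mathbb R^N$; a set $\mathcal A\subset\mathcal X$ with $0\in\mathcal A$ and $\mathcal A+\mathcal X_+\subset\mathcal A$. Asymptotic notions: for a nonempty set $C$ in a topological vector space, $C^\infty=\{X:\exists\text{ nets }(X_\alpha)\subset C,\ (\lambda_\alpha)\subset[0,\infty),\ \lambda_\alpha\to0,\ \lambda_\alpha X_\alpha\to X\}$. For $f:\mathbb R^N\to\mathbb R$, its asymptotic function $f^\infty:\mathbb R^N\to[-\infty,\infty]$ is the function whose epigraph $\{(x,m)\in\mathbb R^N\times\mathbb R: f^\infty(x)\le m\}$ equals $(\operatorname{epi}f)^\infty$, where $\operatorname{epi}f=\{(x,m)\in\mathbb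 R^N\times\mathbb R: f(x)\le m\}$. A portfolio $x\in\mathbb R^N$ is a scalable acceptable deal if $x\in\mathcal P^\infty$, $V_0^\infty(x)\le0$ and $V_1(x)\in\mathcal A^\infty\setminus\{0\}$. Define $\mathcal L=\{x\in\mathcal P^\infty: V_0^\infty(x)\le0,\ V_1(x)\in\mathcal A^\infty\}$. *)

theory Defs
  imports "HOL-Analysis.Analysis"
begin

text \<open>A net (X_alpha, lambda_alpha) indexed by a directed set is represented by the
  (proper) filter it induces on the product real x 'a of pairs (lambda_alpha, X_alpha).\<close>
definition asym_cone :: "'a::{real_vector,topological_space} set \<Rightarrow> 'a set" where
  "asym_cone C = {X. \<exists>F :: (real \<times> 'a) filter. F \<noteq> bot \<and>
      (\<forall>\<^sub>F p in F. snd p \<in> C \<and> fst p \<ge> 0) \<and>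
      (fst \<longlongrightarrow> 0) F \<and>
      ((\<lambda>p. fst p *\<^sub>R snd p) \<longlongrightarrow> X) F}"

definition epi :: "('a \<Rightarrow> real) \<Rightarrow> ('a \<times> real) set" where
  "epi f = {(x, m). f x \<le> m}"

definition asym_fun :: "(real^'n \<Rightarrow> real) \<Rightarrow> real^'n \<Rightarrow> ereal" where
  "asym_fun f x = Inf {ereal m | m. (x, m) \<in> asym_cone (epi f)}"

definition scalable_acceptable_deal ::
  "(real^'n) set \<Rightarrow> (real^'n \<Rightarrow> real) \<Rightarrow> (real^'n \<Rightarrow> 'x::{real_vector,topological_space})
     \<Rightarrow> 'x set \<Rightarrow> real^'n \<Rightarrow> bool" where
  "scalable_acceptable_deal P V0 V1 A x \<longleftrightarrow>
     x \<in> asym_cone P \<and> asym_fun V0 x \<le> 0 \<and> V1 x \<in> asym_cone A - {0}"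

definition L_set ::
  "(real^'n) set \<Rightarrow> (real^'n \<Rightarrow> real) \<Rightarrow> (real^'n \<Rightarrow> 'x::{real_vector,topological_space})
     \<Rightarrow> 'x set \<Rightarrow> (real^'n) set" where
  "L_set P V0 V1 A = {x \<in> asym_cone P. asym_fun V0 x \<le> 0 \<and> V1 x \<in> asym_cone A}"

end

theory Submission
  imports Defs
begin

text \<open>Every deal lies in \<open>\<L>\<close> and has nonzero terminal payoff, and \<open>0 \<in> \<L>\<close>; this gives the first
  two implications. For the third, if \<open>\<L>\<close> is a subspace then with \<open>x\<close> also \<open>-x \<in> \<L>\<close>, and
  \<open>-V\<^sub>1 x = V\<^sub>1 (-x) + (-V\<^sub>1 (-x) - V\<^sub>1 x)\<close> is an element of \<open>\<A>\<^sup>\<infinity>\<close> plus a positive element.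
  Since \<open>\<A>\<close> is upward closed, so is \<open>\<A>\<^sup>\<infinity>\<close>, hence \<open>\<plusminus>V\<^sub>1 x \<in> \<A>\<^sup>\<infinity>\<close> and pointedness of
  \<open>\<A>\<^sup>\<infinity>\<close> forces \<open>V\<^sub>1 x = 0\<close>.\<close>

lemma zero_in_asym_cone:
  fixes C :: "'a::{real_vector,topological_space} set"
  assumes "c \<in> C"
  shows "0 \<in> asym_cone C"
proof -
  let ?F = "principal {(0::real, c)}"
  have "?F \<noteq> bot" "\<forall>\<^sub>F p in ?F. snd p \<in> C \<and> fst p \<ge> 0"
    using assms by (simp_all add: principal_eq_bot_iff eventually_principal)
  moreover have "(fst \<longlongrightarrow> 0) ?F" "((\<lambda>p. fst p *\<^sub>R snd p) \<longlongrightarrow> 0) ?F"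
    by (simp_all add: tendsto_eventually eventually_principal)
  ultimately show ?thesis
    unfolding asym_cone_def by blast
qed

lemma asym_fun_le:
  assumes "(x, m) \<in> asym_cone (epi f)"
  shows "asym_fun f x \<le> ereal m"
  using assms unfolding asym_fun_def by (auto intro: Inf_lower)

lemma asym_cone_add_cone:
  fixes A K :: "'x::{real_vector,topological_space} set"
  assumes add_cont: "continuous_on UNIV (\<lambda>p::'x \<times> 'x. fst p + snd p)"
    and "cone K" and A_add: "\<And>a k. a \<in> A \<Longrightarrow> k \<in> K \<Longrightarrow> a + k \<in> A" and "0 \<in> A"
    and a: "a \<in> asym_cone A" and "k \<in> K"
  shows "a + k \<in> asym_cone A"
proof -
  obtain F where F: "F \<noteq> bot" "\<forall>\<^sub>F p in F. snd p \<in> A \<and> fst p \<ge> 0"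
    "(fst \<longlongrightarrow> 0) F" "((\<lambda>p. fst p *\<^sub>R snd p) \<longlongrightarrow> a) F"
    using a unfolding asym_cone_def by blast
  text \<open>A pair \<open>(\<lambda>, X)\<close> with \<open>\<lambda> > 0\<close> is replaced by \<open>(\<lambda>, X + k/\<lambda>)\<close>; one with \<open>\<lambda> = 0\<close>
    carries no information and is replaced by \<open>(t, 0 + k/t)\<close> for an auxiliary \<open>t \<rightarrow> 0\<^sup>+\<close>.
    In both cases the scaled value grows by exactly \<open>k\<close>.\<close>
  define h where "h = (\<lambda>((l, X), t). if l > 0 then (l, X + (1 / l) *\<^sub>R k) else (t, (1 / t) *\<^sub>R k))"
  define H where "H = F \<times>\<^sub>F at_right (0::real)"
  define G where "G = filtermap h H"
  have H_ev: "\<forall>\<^sub>F q in H. snd (fst q) \<in> A \<and> fst (fst q) \<ge> 0 \<and> snd q > 0"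
    using eventually_prodI[OF F(2) eventually_at_right_less[of "0::real"]] by (simp add: H_def)
  have lam_lim: "((\<lambda>q. fst (fst q)) \<longlongrightarrow> 0) H"
    unfolding H_def by (rule filterlim_compose[OF F(3) filterlim_fst])
  have t_lim: "(snd \<longlongrightarrow> 0) H"
    unfolding H_def
    using filterlim_compose[OF tendsto_ident_at[of "0::real" "{0<..}"] filterlim_snd[of "at_right (0::real)" F]] by simp
  have scaled_lim: "((\<lambda>q. fst (fst q) *\<^sub>R snd (fst q) + k) \<longlongrightarrow> a + k) H"
  proof -
    have "((\<lambda>q. fst (fst q) *\<^sub>R snd (fst q)) \<longlongrightarrow> a) H"
      unfolding H_def by (rule filterlim_compose[OF F(4) filterlim_fst])
    then have "((\<lambda>q. (fst (fst q) *\<^sub>R snd (fst q), k)) \<longlongrightarrow> (a, k)) H"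
      by (intro tendsto_Pair tendsto_const)
    from continuous_on_tendsto_compose[OF add_cont this] show ?thesis
      by (simp add: o_def)
  qed
  have "G \<noteq> bot"
    using F(1) by (simp add: G_def H_def filtermap_bot_iff prod_filter_eq_bot)
  moreover have "\<forall>\<^sub>F p in G. snd p \<in> A \<and> fst p \<ge> 0"
    unfolding G_def eventually_filtermap
  proof (rule eventually_mono[OF H_ev])
    fix q :: "(real \<times> 'x) \<times> real"
    assume q: "snd (fst q) \<in> A \<and> fst (fst q) \<ge> 0 \<and> snd q > 0"
    have K_scaled: "(1 / fst (fst q)) *\<^sub>R k \<in> K" "(1 / snd q) *\<^sub>R k \<in> K"
      using \<open>cone K\<close> \<open>k \<in> K\<close> q unfolding cone_def by auto
    show "snd (h q) \<in> A \<and> fst (h q) \<ge> 0"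
      using q A_add[OF _ K_scaled(1)] A_add[OF \<open>0 \<in> A\<close> K_scaled(2)]
      unfolding h_def by (simp add: case_prod_beta)
  qed
  moreover have "(fst \<longlongrightarrow> 0) G"
    unfolding G_def filterlim_filtermap
  proof (rule tendsto_sandwich)
    show "\<forall>\<^sub>F q in H. 0 \<le> fst (h q)" "\<forall>\<^sub>F q in H. fst (h q) \<le> fst (fst q) + snd q"
      by (auto intro: eventually_mono[OF H_ev] simp: h_def case_prod_beta)
    show "((\<lambda>q. fst (fst q) + snd q) \<longlongrightarrow> 0) H"
      using tendsto_add[OF lam_lim t_lim] by simp
  qed simp
  moreover have "((\<lambda>p. fst p *\<^sub>R snd p) \<longlongrightarrow> a + k) G"
    unfolding G_def filterlim_filtermap
  proof (rule Lim_transform_eventually[OF scaled_lim])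
    show "\<forall>\<^sub>F q in H. fst (fst q) *\<^sub>R snd (fst q) + k = fst (h q) *\<^sub>R snd (h q)"
      by (rule eventually_mono[OF H_ev]) (auto simp: h_def case_prod_beta scaleR_add_right)
  qed
  ultimately show ?thesis
    unfolding asym_cone_def by blast
qed

lemma zero_in_L_set:
  assumes "0 \<in> P" "V0 0 = 0" "V1 0 = 0" "0 \<in> A"
  shows "0 \<in> L_set P V0 V1 A"
proof -
  have "(0, 0) \<in> asym_cone (epi V0)"
    using zero_in_asym_cone[of "(0, 0)" "epi V0"] \<open>V0 0 = 0\<close> by (simp add: epi_def zero_prod_def)
  then have "asym_fun V0 0 \<le> 0"
    using asym_fun_le zero_ereal_def by metis
  then show ?thesis
    using zero_in_asym_cone[OF \<open>0 \<in> P\<close>] zero_in_asym_cone[OF \<open>0 \<in> A\<close>] \<open>V1 0 = 0\<close>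
    unfolding L_set_def by simp
qed

lemma scalable_acceptable_deal_iff:
  "scalable_acceptable_deal P V0 V1 A x \<longleftrightarrow> x \<in> L_set P V0 V1 A \<and> V1 x \<noteq> 0"
  unfolding scalable_acceptable_deal_def L_set_def by auto

lemma asym_cone_pointed_imp_V1_zero:
  fixes V1 :: "real^'n \<Rightarrow> 'x::{real_vector,topological_space}"
  assumes add_cont: "continuous_on UNIV (\<lambda>p::'x \<times> 'x. fst p + snd p)"
    and K_cone: "cone K" and A_add: "\<And>a k. a \<in> A \<Longrightarrow> k \<in> K \<Longrightarrow> a + k \<in> A" and A0: "0 \<in> A"
    and V1_sub: "- V1 (- x) - V1 x \<in> K"
    and pointed: "asym_cone A \<inter> uminus ` asym_cone A = {0}"
    and x_L: "x \<in> L_set P V0 V1 A" and neg_x_L: "- x \<in> L_set P V0 V1 A"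
  shows "V1 x = 0"
proof -
  have "V1 x \<in> asym_cone A" "V1 (- x) \<in> asym_cone A"
    using x_L neg_x_L unfolding L_set_def by auto
  moreover from asym_cone_add_cone[OF add_cont K_cone A_add A0 this(2) V1_sub]
  have "- V1 x \<in> asym_cone A" by simp
  ultimately show ?thesis
    using pointed by (metis IntI image_eqI minus_minus singletonD)
qed

theorem mainTheorem7:
  fixes Xp :: "'x::{real_vector,topological_space} set"
    and P :: "(real^'n) set"
    and V0 :: "real^'n \<Rightarrow> real"
    and V1 :: "real^'n \<Rightarrow> 'x"
    and A :: "'x set"
  assumes tvs_add: "continuous_on UNIV (\<lambda>p::'x \<times> 'x. fst p + snd p)"
    and tvs_smult: "continuous_on UNIV (\<lambda>p::real \<times> 'x. fst p *\<^sub>R snd p)"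
    and Xp_convex: "convex Xp" and Xp_cone: "cone Xp" and Xp_zero: "0 \<in> Xp"
    and Xp_pointed: "Xp \<inter> uminus ` Xp = {0}"
    and P0: "0 \<in> P"
    and V00: "V0 0 = 0" and V0_ineq: "\<And>x. V0 x \<ge> - V0 (- x)"
    and V10: "V1 0 = 0" and V1_ineq: "\<And>x. - V1 (- x) - V1 x \<in> Xp"
    and A0: "0 \<in> A" and A_mono: "\<And>a k. a \<in> A \<Longrightarrow> k \<in> Xp \<Longrightarrow> a + k \<in> A"
  shows "(L_set P V0 V1 A = {0} \<longrightarrow> \<not> (\<exists>x. scalable_acceptable_deal P V0 V1 A x))
       \<and> ({x. V1 x = 0} = {0} \<longrightarrow>
            (\<not> (\<exists>x. scalable_acceptable_deal P V0 V1 A x)) \<longrightarrow> L_set P V0 V1 A = {0})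
       \<and> (asym_cone A \<inter> uminus ` asym_cone A = {0} \<longrightarrow>
            subspace (L_set P V0 V1 A) \<longrightarrow> \<not> (\<exists>x. scalable_acceptable_deal P V0 V1 A x))"
proof (intro conjI impI)
  have L0: "0 \<in> L_set P V0 V1 A"
    using P0 V00 V10 A0 by (rule zero_in_L_set)
  show "\<not> (\<exists>x. scalable_acceptable_deal P V0 V1 A x)" if "L_set P V0 V1 A = {0}"
    using that V10 by (auto simp: scalable_acceptable_deal_iff)
  show "L_set P V0 V1 A = {0}"
    if "{x. V1 x = 0} = {0}" and "\<not> (\<exists>x. scalable_acceptable_deal P V0 V1 A x)"
    using that L0 by (auto simp: scalable_acceptable_deal_iff)
  show "\<not> (\<exists>x. scalable_acceptable_deal P V0 V1 A x)"
    if pointed: "asym_cone A \<inter> uminus ` asym_cone A = {0}" and L_sub: "subspace (L_set P V0 V1 A)"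
  proof
    assume "\<exists>x. scalable_acceptable_deal P V0 V1 A x"
    then obtain x where x: "x \<in> L_set P V0 V1 A" "V1 x \<noteq> 0"
      by (auto simp: scalable_acceptable_deal_iff)
    have "V1 x = 0"
      using asym_cone_pointed_imp_V1_zero[where ?V1.0 = V1, OF tvs_add Xp_cone A_mono A0 V1_ineq pointed
          x(1) subspace_neg[OF L_sub x(1)]] .
    with x(2) show False ..
  qed
qed

end
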